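(* Let $k$ be divisible by $3$ and let $0<\varepsilon<3/k$. Let $G$ be the complete bipartite graph with one side the terminals $Q=\{q_1,\dots,q_k\}$ and the other side non-terminals $U=\{u_{S_1},\dots,u_{S_l}\}$, where $l=\binom{k}{2k/3}$ and $S_1,\dots,S_l$ are all the subsets of $Q$ of size $2k/3$. Edge costs: $c(u_{S_i},q)=1$ if $q\in S_i$ and $c(u_{S_i},q)=2+\varepsilon$ if $q\in\bar S_i=Q\setminus S_i$. Then for every $i\in[l]$, the cut $(W,V(G)\setminus W)$ with $W=\{u_{S_i}\}\cup\bar S_i$ and $V(G)\setminus W=\{u_{S_j}:j\neq i\}\cup S_i$ is the unique minimum-cost $S_i$-separating cut of $(G,c)$.
   Context: A cut $(W,V(G)\setminus W)$ is $S$-separating if $W\cap Q\in\{S,Q\setminus S\}$; its cost is the sum of costs of edges with exactly one endpoint in $W$. Unique means every other $S_i$-separating cut has strictly larger cost. *)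

theory Defs
  imports Complex_Main
begin

definition cut_cost :: "'a set set \<Rightarrow> ('a set \<Rightarrow> real) \<Rightarrow> 'a set \<Rightarrow> real" where
  "cut_cost E c W = (\<Sum>e\<in>{e\<in>E. card (e \<inter> W) = 1}. c e)"

definition separating_cut :: "'a set \<Rightarrow> 'a set \<Rightarrow> 'a set \<Rightarrow> 'a set \<Rightarrow> bool" where
  "separating_cut V Q S W \<longleftrightarrow> W \<subseteq> V \<and> (W \<inter> Q = S \<or> W \<inter> Q = Q - S)"

(* The cut (W, V - W) is the unique minimum-cost S-separating cut:
   it is S-separating and every other S-separating cut (i.e. not the same unordered
   bipartition {W, V - W}) has strictly larger cost. *)
definition unique_min_sep_cut ::
  "'a set \<Rightarrow> 'a set set \<Rightarrow> ('a set \<Rightarrow> real) \<Rightarrow> 'a set \<Rightarrow> 'a set \<Rightarrow> 'a set \<Rightarrow> bool" where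
  "unique_min_sep_cut V E c Q S W \<longleftrightarrow>
     separating_cut V Q S W \<and>
     (\<forall>W'. separating_cut V Q S W' \<and> W' \<noteq> W \<and> W' \<noteq> V - W \<longrightarrow>
            cut_cost E c W < cut_cost E c W')"

(* The concrete construction. Terminals q_0..q_{k-1}; non-terminals u_S for S a
   subset of the terminal indices {0..<k} of size 2k/3. *)
datatype vtx = Term nat | NT "nat set"

definition subsets_Q :: "nat \<Rightarrow> nat set set" where
  "subsets_Q k = {S. S \<subseteq> {0..<k} \<and> card S = 2 * k div 3}"

definition terms :: "nat \<Rightarrow> vtx set" where
  "terms k = Term ` {0..<k}"

definition verts :: "nat \<Rightarrow> vtx set" where
  "verts k = terms k \<union> NT ` subsets_Q k"

definition edges :: "nat \<Rightarrow> vtx set set" where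
  "edges k = {{NT S, Term q} | S q. S \<in> subsets_Q k \<and> q \<in> {0..<k}}"

definition cost :: "real \<Rightarrow> vtx set \<Rightarrow> real" where
  "cost \<epsilon> e = (if \<exists>S q. e = {NT S, Term q} \<and> q \<in> S then 1 else 2 + \<epsilon>)"

end

theory Submission
  imports Defs
begin

(* Every edge joins a non-terminal u_T to a terminal q, so the cost of a cut
   is a sum over the non-terminals u_T of the cost of the edges from u_T to the terminals
   on the other side.  Once the terminal side of W is fixed to Q - S, the contribution of
   u_T is  A T = c(u_T, S)  if u_T is in W and  B T = c(u_T, Q - S)  otherwise, and these
   choices are independent.  Writing c(u_T,q) = 1 + (1+eps)[q notin T] and k = 3m gives
     A T = 2m + (1+eps) |S - T|,      B T = m + (1+eps) (m - |S - T|).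
   Hence A S = 2m < (2+eps) m = B S, while for T <> S we have |S - T| >= 1 and
   A T - B T = 2|S - T| (1+eps) - eps m > 0 because eps m < 1.  So the unique optimum puts
   u_S with Q - S and every other u_T with S, which is the cut W0 of the theorem.  An
   S-separating cut with terminal side S is handled by passing to its complement, which
   has the same cost. *)

definition edge_cost :: "real \<Rightarrow> nat set \<Rightarrow> nat \<Rightarrow> real" where
  "edge_cost \<epsilon> T q = (if q \<in> T then 1 else 2 + \<epsilon>)"

lemma cost_edge: "cost \<epsilon> {NT T, Term q} = edge_cost \<epsilon> T q"
  unfolding cost_def edge_cost_def by (auto simp: doubleton_eq_iff)

lemma finite_subsets_Q: "finite (subsets_Q k)"
  unfolding subsets_Q_def by (rule finite_subset[of _ "Pow {0..<k}"]) auto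

lemma edge_crosses_cut:
  "card ({NT T, Term q} \<inter> W) = 1 \<longleftrightarrow> (NT T \<in> W) \<noteq> (Term q \<in> W)"
  by (cases "NT T \<in> W"; cases "Term q \<in> W") (auto simp: Int_insert_left)

lemma cut_cost_bipartite:
  "cut_cost (edges k) (cost \<epsilon>) W =
    (\<Sum>T\<in>subsets_Q k. \<Sum>q\<in>{q\<in>{0..<k}. (NT T \<in> W) \<noteq> (Term q \<in> W)}. edge_cost \<epsilon> T q)"
proof -
  define edge where "edge = (\<lambda>(T::nat set, q::nat). {NT T, Term q})"
  define P where "P = Sigma (subsets_Q k) (\<lambda>T. {q\<in>{0..<k}. (NT T \<in> W) \<noteq> (Term q \<in> W)})"
  have cut_edges: "{e\<in>edges k. card (e \<inter> W) = 1} = edge ` P"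
    unfolding edge_def P_def edges_def using edge_crosses_cut by fastforce
  have "inj_on edge P"
    unfolding edge_def inj_on_def by (auto simp: doubleton_eq_iff)
  then have "cut_cost (edges k) (cost \<epsilon>) W = sum (cost \<epsilon> \<circ> edge) P"
    unfolding cut_cost_def cut_edges by (rule sum.reindex)
  also have "\<dots> = (\<Sum>(T,q)\<in>P. edge_cost \<epsilon> T q)"
    by (rule sum.cong) (auto simp: edge_def cost_edge)
  also have "\<dots> = (\<Sum>T\<in>subsets_Q k. \<Sum>q\<in>{q\<in>{0..<k}. (NT T \<in> W) \<noteq> (Term q \<in> W)}. edge_cost \<epsilon> T q)"
    unfolding P_def by (rule sum.Sigma[symmetric]) (auto simp: finite_subsets_Q)
  finally show ?thesis .
qed

lemma cut_cost_complement:
  assumes "W \<subseteq> verts k"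
  shows "cut_cost (edges k) (cost \<epsilon>) (verts k - W) = cut_cost (edges k) (cost \<epsilon>) W"
  unfolding cut_cost_bipartite
proof (rule sum.cong[OF refl])
  fix T assume "T \<in> subsets_Q k"
  then have "{q\<in>{0..<k}. (NT T \<in> verts k - W) \<noteq> (Term q \<in> verts k - W)}
      = {q\<in>{0..<k}. (NT T \<in> W) \<noteq> (Term q \<in> W)}"
    by (auto simp: verts_def terms_def)
  then show "(\<Sum>q\<in>{q\<in>{0..<k}. (NT T \<in> verts k - W) \<noteq> (Term q \<in> verts k - W)}. edge_cost \<epsilon> T q)
      = (\<Sum>q\<in>{q\<in>{0..<k}. (NT T \<in> W) \<noteq> (Term q \<in> W)}. edge_cost \<epsilon> T q)"
    by simp
qed

lemma cut_cost_terminal_side: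
  assumes "W \<inter> terms k = terms k - Term ` S" and "S \<subseteq> {0..<k}"
  shows "cut_cost (edges k) (cost \<epsilon>) W =
    (\<Sum>T\<in>subsets_Q k. if NT T \<in> W then (\<Sum>q\<in>S. edge_cost \<epsilon> T q)
                                   else (\<Sum>q\<in>{0..<k} - S. edge_cost \<epsilon> T q))"
  unfolding cut_cost_bipartite
proof (rule sum.cong[OF refl])
  fix T
  have terminal_side: "Term q \<in> W \<longleftrightarrow> q \<notin> S" if "q < k" for q
    using that assms(1) unfolding terms_def by (auto simp: set_eq_iff)
  have "{q\<in>{0..<k}. (NT T \<in> W) \<noteq> (Term q \<in> W)} = (if NT T \<in> W then S else {0..<k} - S)"
    using assms(2) terminal_side by auto
  then show "(\<Sum>q\<in>{q\<in>{0..<k}. (NT T \<in> W) \<noteq> (Term q \<in> W)}. edge_cost \<epsilon> T q) =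
      (if NT T \<in> W then (\<Sum>q\<in>S. edge_cost \<epsilon> T q) else (\<Sum>q\<in>{0..<k} - S. edge_cost \<epsilon> T q))"
    by simp
qed

lemma vertex_subsets_eqI:
  assumes "W \<subseteq> verts k" and "W' \<subseteq> verts k"
    and "\<And>q. q < k \<Longrightarrow> Term q \<in> W \<longleftrightarrow> Term q \<in> W'"
    and "\<And>T. T \<in> subsets_Q k \<Longrightarrow> NT T \<in> W \<longleftrightarrow> NT T \<in> W'"
  shows "W = W'"
proof (rule set_eqI)
  fix x
  show "x \<in> W \<longleftrightarrow> x \<in> W'"
  proof (cases "x \<in> verts k")
    case True
    then show ?thesis using assms(3,4) by (auto simp: verts_def terms_def)
  next
    case False
    then show ?thesis using assms(1,2) by blast
  qed
qed

(* Each edge costs 1, plus 1 + eps if its terminal is outside T. *)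
lemma sum_edge_cost:
  assumes "finite X"
  shows "(\<Sum>q\<in>X. edge_cost \<epsilon> T q) = real (card X) + (1 + \<epsilon>) * real (card (X - T))"
proof -
  have outside_T: "X \<inter> {q. q \<notin> T} = X - T" by blast
  have "(\<Sum>q\<in>X. edge_cost \<epsilon> T q) = (\<Sum>q\<in>X. 1 + (1 + \<epsilon>) * (if q \<in> X - T then 1 else 0))"
    by (rule sum.cong) (auto simp: edge_cost_def)
  also have "\<dots> = real (card X) + (1 + \<epsilon>) * real (card (X - T))"
    using assms outside_T
    by (simp add: sum.distrib sum_distrib_left[symmetric] sum.If_cases Int_absorb1)
  finally show ?thesis .
qed

lemma subsets_Q_props:
  assumes "S \<in> subsets_Q k" and "k = 3 * m"
  shows "S \<subseteq> {0..<k}" "finite S" "card S = 2 * m" "card ({0..<k} - S) = m"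
  using assms by (auto simp: subsets_Q_def card_Diff_subset finite_subset)

(* Of the m terminals outside S, exactly m - |S - T| lie outside T as well, because
   |T - S| = |S - T| for sets of equal size. *)
lemma card_outside_both:
  assumes "S \<in> subsets_Q k" "T \<in> subsets_Q k" and "k = 3 * m"
  shows "card ({0..<k} - S - T) + card (S - T) = m"
proof -
  note S = subsets_Q_props[OF assms(1,3)] and T = subsets_Q_props[OF assms(2,3)]
  have "card (T - S) = card (S - T)"
    using S(2,3) T(2,3) by (metis card_Diff_subset_Int finite_Int inf_commute inf_le1)
  then have "card (S \<union> T) = 2 * m + card (S - T)"
    using S(2,3) T(2) by (metis Un_Diff_cancel card_Un_disjoint finite_Diff Diff_disjoint)
  moreover have "{0..<k} - S - T = {0..<k} - (S \<union> T)" by blast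
  moreover have sub: "S \<union> T \<subseteq> {0..<k}" using S(1) T(1) by blast
  then have "card ({0..<k} - (S \<union> T)) = k - card (S \<union> T)"
    using card_Diff_subset[OF finite_subset[OF sub] sub] by simp
  moreover have "card (S \<union> T) \<le> k"
    using card_mono[OF finite_atLeastLessThan sub] by simp
  ultimately show ?thesis
    using assms(3) by simp
qed

lemma own_side_cheaper:
  assumes "S \<in> subsets_Q k" and "k = 3 * m" and "m \<ge> 1" and "0 < \<epsilon>"
  shows "(\<Sum>q\<in>S. edge_cost \<epsilon> S q) < (\<Sum>q\<in>{0..<k} - S. edge_cost \<epsilon> S q)"
proof -
  note S = subsets_Q_props[OF assms(1,2)]
  have "(\<Sum>q\<in>S. edge_cost \<epsilon> S q) = 2 * real m"
    using sum_edge_cost[OF S(2)] S(3) by simp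
  moreover have "(\<Sum>q\<in>{0..<k} - S. edge_cost \<epsilon> S q) = (2 + \<epsilon>) * real m"
    using sum_edge_cost[of "{0..<k} - S" \<epsilon> S] S(4) by (simp add: algebra_simps)
  moreover have "0 < \<epsilon> * real m" using assms(3,4) by simp
  ultimately show ?thesis by (simp add: algebra_simps)
qed

lemma other_side_cheaper:
  assumes "S \<in> subsets_Q k" "T \<in> subsets_Q k" "T \<noteq> S" and "k = 3 * m"
    and "0 < \<epsilon>" and "real m * \<epsilon> < 1"
  shows "(\<Sum>q\<in>{0..<k} - S. edge_cost \<epsilon> T q) < (\<Sum>q\<in>S. edge_cost \<epsilon> T q)"
proof -
  note S = subsets_Q_props[OF assms(1,4)] and T = subsets_Q_props[OF assms(2,4)]
  define b where "b = card (S - T)"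
  have "S - T \<noteq> {}"
    using assms(3) S(2,3) T(2,3) card_subset_eq[of T S] by auto
  then have b_pos: "1 \<le> real b" unfolding b_def using S(2) by (simp add: Suc_leI card_gt_0_iff)
  have outside: "real (card ({0..<k} - S - T)) = real m - real b"
    using card_outside_both[OF assms(1,2,4)] unfolding b_def by linarith
  have to_S: "(\<Sum>q\<in>S. edge_cost \<epsilon> T q) = 2 * real m + (1 + \<epsilon>) * real b"
    using sum_edge_cost[OF S(2)] S(3) unfolding b_def by simp
  have to_rest: "(\<Sum>q\<in>{0..<k} - S. edge_cost \<epsilon> T q) = real m + (1 + \<epsilon>) * (real m - real b)"
    using sum_edge_cost[of "{0..<k} - S" \<epsilon> T] S(4) outside by simp
  have "0 \<le> \<epsilon> * real b" using assms(5) by simp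
  then show ?thesis
    unfolding to_S to_rest using b_pos assms(6) by (simp add: algebra_simps)
qed

(* Among all vertex sets whose terminal side is Q - S, the set {u_S} \<union> (Q - S) is the
   unique cheapest: the choice for each non-terminal is independent and optimal. *)
lemma optimal_for_terminal_side:
  assumes S: "S \<in> subsets_Q k" and k: "k = 3 * m" and "m \<ge> 1" "0 < \<epsilon>" "real m * \<epsilon> < 1"
    and W: "W \<subseteq> verts k" "W \<inter> terms k = terms k - Term ` S"
    and W_ne: "W \<noteq> {NT S} \<union> Term ` ({0..<k} - S)"
  shows "cut_cost (edges k) (cost \<epsilon>) ({NT S} \<union> Term ` ({0..<k} - S)) < cut_cost (edges k) (cost \<epsilon>) W"
proof -
  define W0 where "W0 = {NT S} \<union> Term ` ({0..<k} - S)"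
  define A where "A T = (\<Sum>q\<in>S. edge_cost \<epsilon> T q)" for T
  define B where "B T = (\<Sum>q\<in>{0..<k} - S. edge_cost \<epsilon> T q)" for T
  have Sk: "S \<subseteq> {0..<k}" using subsets_Q_props[OF S k] by simp
  have W0: "W0 \<subseteq> verts k" "W0 \<inter> terms k = terms k - Term ` S"
    using S unfolding W0_def verts_def terms_def by auto
  have W0_NT: "NT T \<in> W0 \<longleftrightarrow> T = S" for T unfolding W0_def by auto
  have A_S: "A S < B S" unfolding A_def B_def by (rule own_side_cheaper) fact+
  have B_T: "B T < A T" if "T \<in> subsets_Q k" "T \<noteq> S" for T
    unfolding A_def B_def by (rule other_side_cheaper[OF S that k]) fact+
  have same_terminals: "Term q \<in> W \<longleftrightarrow> Term q \<in> W0" if "q < k" for q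
  proof -
    have "Term q \<in> terms k" using that by (simp add: terms_def)
    then show ?thesis using W(2) W0(2) by blast
  qed
  obtain T where T: "T \<in> subsets_Q k" and differs: "NT T \<in> W \<longleftrightarrow> NT T \<notin> W0"
    using vertex_subsets_eqI[OF W(1) W0(1) same_terminals] W_ne unfolding W0_def by blast
  have "(\<Sum>T\<in>subsets_Q k. if NT T \<in> W0 then A T else B T)
      < (\<Sum>T\<in>subsets_Q k. if NT T \<in> W then A T else B T)"
  proof (rule sum_strict_mono_ex1[OF finite_subsets_Q])
    show "\<forall>T\<in>subsets_Q k. (if NT T \<in> W0 then A T else B T) \<le> (if NT T \<in> W then A T else B T)"
      using A_S B_T unfolding W0_NT by (auto intro: less_imp_le)
    show "\<exists>T\<in>subsets_Q k. (if NT T \<in> W0 then A T else B T) < (if NT T \<in> W then A T else B T)"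
      using T differs A_S B_T[OF T] unfolding W0_NT by (intro bexI[OF _ T]) auto
  qed
  then show ?thesis
    using cut_cost_terminal_side[OF W(2) Sk] cut_cost_terminal_side[OF W0(2) Sk]
    unfolding A_def B_def W0_def by simp
qed

theorem lemma3p5:
  fixes k :: nat and \<epsilon> :: real
  assumes "3 dvd k" and "0 < \<epsilon>" and "\<epsilon> < 3 / real k"
  shows "\<forall>S\<in>subsets_Q k.
           unique_min_sep_cut (verts k) (edges k) (cost \<epsilon>) (terms k) (Term ` S)
             ({NT S} \<union> Term ` ({0..<k} - S))"
proof
  fix S assume S: "S \<in> subsets_Q k"
  obtain m where k: "k = 3 * m" using assms(1) by blast
  have "k \<noteq> 0" using assms(2,3) by (cases "k = 0") auto
  then have m: "m \<ge> 1" and me: "real m * \<epsilon> < 1"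
    using k assms(3) by (auto simp: pos_less_divide_eq algebra_simps)
  define W0 where "W0 = {NT S} \<union> Term ` ({0..<k} - S)"
  note optimal = optimal_for_terminal_side[OF S k m assms(2) me, folded W0_def]
  have W0: "W0 \<subseteq> verts k" "W0 \<inter> terms k = terms k - Term ` S"
    using S unfolding W0_def verts_def terms_def by auto
  have "cut_cost (edges k) (cost \<epsilon>) W0 < cut_cost (edges k) (cost \<epsilon>) W"
    if "separating_cut (verts k) (terms k) (Term ` S) W" "W \<noteq> W0" "W \<noteq> verts k - W0" for W
  proof -
    have W: "W \<subseteq> verts k" using that(1) unfolding separating_cut_def by blast
    from that(1) consider "W \<inter> terms k = Term ` S" | "W \<inter> terms k = terms k - Term ` S"
      unfolding separating_cut_def by blast
    then show ?thesis
    proof cases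
      case 1
      then have "(verts k - W) \<inter> terms k = terms k - Term ` S"
        by (auto simp: verts_def)
      moreover have "verts k - W \<noteq> W0" using that(3) W by blast
      ultimately show ?thesis
        using optimal[of "verts k - W"] cut_cost_complement[OF W] by auto
    qed (use optimal W that(2) in blast)
  qed
  then show "unique_min_sep_cut (verts k) (edges k) (cost \<epsilon>) (terms k) (Term ` S) W0"
    using W0 unfolding unique_min_sep_cut_def separating_cut_def by blast
qed

end
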